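(* Let $\bm\alpha,\bm\beta\in\mathbb C^\ell$ with $\bm\alpha\neq0$ and $\bm\beta\neq0$, and let $d\in\mathbb C$. Then $L(d,\bm\alpha,\bm\beta)=W(\bm\alpha,\bm\beta)\big/\big\langle (I-d)\,\mathbb C[I]\,w_{\bm\alpha,\bm\beta}\big\rangle$ is an irreducible $\mathfrak{gl}(2\ell,\mathbb C)$-module, where $\langle S\rangle$ denotes the $\mathfrak{gl}(2\ell,\mathbb C)$-submodule generated by $S$.
   Context: $\mathcal A_{2\ell}$ is the complex Weyl algebra generated by $a_i,a_i^*$, $i=1,\dots,2\ell$, with $[a_i,a_j]=[a_i^*,a_j^*]=0$, $[a_i,a_j^*]=\delta_{i,j}$; normal ordering $:xy:=\tfrac12(xy+yx)$. For $\bm\alpha=(\alpha_1,\dots,\alpha_\ell)$, $\bm\beta=(\beta_1,\dots,\beta_\ell)\in\mathbb C^\ell$, $W(\bm\alpha,\bm\beta)=\mathcal A_{2\ell}/I_\ell(\bm\alpha,\bm\beta)$, where $I_\ell(\bm\alpha,\bm\beta)$ is the left ideal generated by $a_i-\alpha_i$ and $a^*_{\ell+i}-\beta_i$ ($i=1,\dots,\ell$); $w_{\bm\alpha,\bm\beta}$ is the image of $1$. $\mathfrak{gl}(2\ell,\mathbb C)$, with matrix units $e_{i,j}$, acts on $\mathcal A_{2\ell}$-modules through the Lie homomorphism $e_{i,j}\mapsto\,:a_ia_j^*:$. $I=\sum_{i=1}^{2\ell}:a_ia_i^*:$ is the action of the central element $\sum_{i=1}^{2\ell}e_{i,i}$,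 and $\mathbb C[I]w_{\bm\alpha,\bm\beta}=\operatorname{span}\{I^kw_{\bm\alpha,\bm\beta}:k\ge0\}$. *)

theory Defs
  imports Main "HOL.Complex"
begin

text \<open>
Vectors are polynomials in the variables
z_1,...,z_{2l} with complex coefficients, represented by their coefficient
function on exponent vectors (finitely supported, only variables 1..2l used).
The Weyl algebra generators act by
  a_j  = d/dz_j + alpha_j,   a*_j = z_j                     (1 <= j <= l)
  a_j  = z_j,                a*_j = - d/dz_j + beta_{j-l}   (l < j <= 2l)
and w = 1.  This is the standard PBW identification
W(alpha,beta) = A_{2l}/I_l(alpha,beta) with
C[a*_1..a*_l, a_{l+1}..a_{2l}] w_{alpha,beta}.
\<close>

type_synonym vec = "(nat \<Rightarrow> nat) \<Rightarrow> complex"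

definition Xop :: "nat \<Rightarrow> vec \<Rightarrow> vec" where
  "Xop j p = (\<lambda>m. if 0 < m j then p (m(j := m j - 1)) else 0)"

definition Dop :: "nat \<Rightarrow> vec \<Rightarrow> vec" where
  "Dop j p = (\<lambda>m. of_nat (m j + 1) * p (m(j := m j + 1)))"

definition aop :: "nat \<Rightarrow> (nat \<Rightarrow> complex) \<Rightarrow> nat \<Rightarrow> vec \<Rightarrow> vec" where
  "aop l \<alpha> j p = (if j \<le> l then (\<lambda>m. Dop j p m + \<alpha> j * p m) else Xop j p)"

definition asop :: "nat \<Rightarrow> (nat \<Rightarrow> complex) \<Rightarrow> nat \<Rightarrow> vec \<Rightarrow> vec" where
  "asop l \<beta> j p = (if j \<le> l then Xop j p else (\<lambda>m. - Dop j p m + \<beta> (j - l) * p m))"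

definition Wcar :: "nat \<Rightarrow> vec set" where
  "Wcar l = {p. finite {m. p m \<noteq> 0} \<and>
                (\<forall>m. p m \<noteq> 0 \<longrightarrow> (\<forall>k. k \<notin> {1..2*l} \<longrightarrow> m k = 0))}"

definition wvec :: vec where
  "wvec = (\<lambda>m. if m = (\<lambda>_. 0) then 1 else 0)"

text \<open>Action of e_{i,j}: the normally ordered product :a_i a*_j:.\<close>
definition Eop :: "nat \<Rightarrow> (nat \<Rightarrow> complex) \<Rightarrow> (nat \<Rightarrow> complex) \<Rightarrow> nat \<Rightarrow> nat \<Rightarrow> vec \<Rightarrow> vec" where
  "Eop l \<alpha> \<beta> i j p =
     (\<lambda>m. (aop l \<alpha> i (asop l \<beta> j p) m + asop l \<beta> j (aop l \<alpha> i p) m) / 2)"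

definition Iop :: "nat \<Rightarrow> (nat \<Rightarrow> complex) \<Rightarrow> (nat \<Rightarrow> complex) \<Rightarrow> vec \<Rightarrow> vec" where
  "Iop l \<alpha> \<beta> p = (\<lambda>m. \<Sum>i\<in>{1..2*l}. Eop l \<alpha> \<beta> i i p m)"

definition gl_submodule :: "nat \<Rightarrow> (nat \<Rightarrow> complex) \<Rightarrow> (nat \<Rightarrow> complex) \<Rightarrow> vec set \<Rightarrow> bool" where
  "gl_submodule l \<alpha> \<beta> M \<longleftrightarrow>
     M \<subseteq> Wcar l \<and> (\<lambda>_. 0) \<in> M \<and>
     (\<forall>p\<in>M. \<forall>q\<in>M. (\<lambda>m. p m + q m) \<in> M) \<and>
     (\<forall>c. \<forall>p\<in>M. (\<lambda>m. c * p m) \<in> M) \<and>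
     (\<forall>i\<in>{1..2*l}. \<forall>j\<in>{1..2*l}. \<forall>p\<in>M. Eop l \<alpha> \<beta> i j p \<in> M)"

definition gen_submodule :: "nat \<Rightarrow> (nat \<Rightarrow> complex) \<Rightarrow> (nat \<Rightarrow> complex) \<Rightarrow> vec set \<Rightarrow> vec set" where
  "gen_submodule l \<alpha> \<beta> S = \<Inter>{M. gl_submodule l \<alpha> \<beta> M \<and> S \<subseteq> M}"

definition CIw :: "nat \<Rightarrow> (nat \<Rightarrow> complex) \<Rightarrow> (nat \<Rightarrow> complex) \<Rightarrow> vec set" where
  "CIw l \<alpha> \<beta> = {(\<lambda>m. \<Sum>k<n. c k * (Iop l \<alpha> \<beta> ^^ k) wvec m) | n c. True}"

definition Nsub :: "nat \<Rightarrow> complex \<Rightarrow> (nat \<Rightarrow> complex) \<Rightarrow> (nat \<Rightarrow> complex) \<Rightarrow> vec set" where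
  "Nsub l d \<alpha> \<beta> = gen_submodule l \<alpha> \<beta>
      {(\<lambda>m. Iop l \<alpha> \<beta> v m - d * v m) | v. v \<in> CIw l \<alpha> \<beta>}"

text \<open>Irreducibility of the quotient W/N as gl(2l,C)-module: it is nonzero and its
  only submodules are 0 and itself; submodules of W/N are exactly M/N for
  submodules M of W containing N.\<close>
definition irreducible_quotient :: "nat \<Rightarrow> (nat \<Rightarrow> complex) \<Rightarrow> (nat \<Rightarrow> complex) \<Rightarrow> vec set \<Rightarrow> bool" where
  "irreducible_quotient l \<alpha> \<beta> N \<longleftrightarrow>
     N \<noteq> Wcar l \<and>
     (\<forall>M. gl_submodule l \<alpha> \<beta> M \<and> N \<subseteq> M \<longrightarrow> M = N \<or> M = Wcar l)"

end

theory Submission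
  imports Defs
begin

text \<open>
  Fix \<open>i0 \<le> l < j0\<close> with \<open>\<alpha>(i0) \<noteq> 0\<close> and \<open>\<beta>(j0 - l) \<noteq> 0\<close>. Then \<open>w\<close> is cyclic:
  \<open>E(i0,j)\<close> for \<open>j \<le> l\<close> and \<open>E(j,j0)\<close> for \<open>j > l\<close> act as multiplication by \<open>z(j)\<close> up to a
  nonzero factor and operators that do not raise the degree. Since \<open>I\<close> is central,
  \<open>(I - d) W\<close> is a submodule containing the generators of \<open>N\<close>, and \<open>{r. (I - d) r \<in> N}\<close>
  is a submodule containing \<open>w\<close>; hence \<open>N = (I - d) W\<close>.

  In the degree in \<open>z(i0)\<close>, the leading part of \<open>I - d\<close> is multiplication by
  \<open>\<alpha>(i0) z(i0)\<close>. So \<open>w \<notin> (I - d) W\<close>, and every polynomial is congruent modulo \<open>(I - d) W\<close>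
  to one free of \<open>z(i0)\<close>. A submodule \<open>M\<close> strictly containing \<open>N\<close> therefore contains a
  nonzero \<open>z(i0)\<close>-free \<open>q\<close>. On such \<open>q\<close>, \<open>E(i0,j)\<close> for \<open>j > l\<close> acts as \<open>-\<alpha>(i0) \<partial>/\<partial>z(j)\<close>
  plus a scalar, and once all these derivatives vanish, \<open>E(i,j0)\<close> for \<open>i \<le> l\<close> acts as
  \<open>\<beta>(j0 - l) \<partial>/\<partial>z(i)\<close> plus a scalar. Differentiating \<open>q\<close> down to a nonzero constant
  gives \<open>w \<in> M\<close>, hence \<open>M = W\<close>.
\<close>

section \<open>The Weyl algebra and the action of \<open>gl(2l)\<close>\<close>

lemma Xop_commute: "Xop i (Xop j p) = Xop j (Xop i p)"
  by (rule ext) (auto simp: Xop_def fun_upd_twist)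

lemma Dop_commute: "Dop i (Dop j p) = Dop j (Dop i p)"
  by (rule ext) (auto simp: Dop_def fun_upd_twist)

lemma Dop_Xop: "Dop i (Xop j p) = (\<lambda>m. Xop j (Dop i p) m + (if i = j then p m else 0))"
  by (rule ext) (auto simp: Dop_def Xop_def fun_upd_twist algebra_simps of_nat_diff fun_upd_idem)

definition linear_op :: "(vec \<Rightarrow> vec) \<Rightarrow> bool" where
  "linear_op T \<longleftrightarrow> (\<forall>a b p q. T (\<lambda>m. a * p m + b * q m) = (\<lambda>m. a * T p m + b * T q m))"

lemma linear_opD: "linear_op T \<Longrightarrow> T (\<lambda>m. a * p m + b * q m) = (\<lambda>m. a * T p m + b * T q m)"
  unfolding linear_op_def by blast

lemma linear_op_zero: "linear_op T \<Longrightarrow> T (\<lambda>_. 0) = (\<lambda>_. 0)"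
  using linear_opD[of T 0 "\<lambda>_. 0" 0 "\<lambda>_. 0"] by simp

lemma linear_op_add: "linear_op T \<Longrightarrow> T (\<lambda>m. p m + q m) = (\<lambda>m. T p m + T q m)"
  using linear_opD[of T 1 p 1 q] by simp

lemma linear_op_scale: "linear_op T \<Longrightarrow> T (\<lambda>m. a * p m) = (\<lambda>m. a * T p m)"
  using linear_opD[of T a p 0 p] by simp

lemma linear_op_scale_right: "linear_op T \<Longrightarrow> T (\<lambda>m. p m * a) = (\<lambda>m. T p m * a)"
  using linear_op_scale[of T a p] by (simp add: mult.commute)

lemma linear_op_diff: "linear_op T \<Longrightarrow> T (\<lambda>m. p m - q m) = (\<lambda>m. T p m - T q m)"
  using linear_opD[of T 1 p "-1" q] by simp

lemma linear_op_divide: "linear_op T \<Longrightarrow> T (\<lambda>m. p m / a) = (\<lambda>m. T p m / a)"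
  using linear_op_scale[of T "inverse a" p] by (simp add: field_simps)

lemma linear_op_if: "linear_op T \<Longrightarrow> T (\<lambda>m. if c then p m else 0) = (\<lambda>m. if c then T p m else 0)"
  by (cases c) (simp_all add: linear_op_zero)

lemma linear_op_sum: "linear_op T \<Longrightarrow> T (\<lambda>m. \<Sum>k\<in>K. f k m) = (\<lambda>m. \<Sum>k\<in>K. T (f k) m)"
proof (induction K rule: infinite_finite_induct)
  case (insert x F)
  then show ?case using linear_op_add[OF insert.prems, of "f x" "\<lambda>m. \<Sum>k\<in>F. f k m"] by simp
qed (simp_all add: linear_op_zero)

lemma linear_op_Xop: "linear_op (Xop j)"
  unfolding linear_op_def by (auto simp: Xop_def)

lemma linear_op_Dop: "linear_op (Dop j)"
  unfolding linear_op_def by (auto simp: Dop_def algebra_simps)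

lemma linear_op_aop: "linear_op (aop l \<alpha> i)"
  unfolding linear_op_def aop_def
  by (auto simp: linear_opD[OF linear_op_Dop] linear_opD[OF linear_op_Xop] algebra_simps)

lemma linear_op_asop: "linear_op (asop l \<beta> i)"
  unfolding linear_op_def asop_def
  by (auto simp: linear_opD[OF linear_op_Dop] linear_opD[OF linear_op_Xop] algebra_simps)

lemmas linear_op_simps =
  linear_op_add linear_op_diff linear_op_scale linear_op_scale_right linear_op_divide linear_op_if linear_op_sum

lemmas XD_linear_simps =
  linear_op_simps[OF linear_op_Xop] linear_op_simps[OF linear_op_Dop]

lemmas weyl_linear_simps =
  linear_op_simps[OF linear_op_aop] linear_op_simps[OF linear_op_asop]

lemma aop_commute: "aop l \<alpha> i (aop l \<alpha> k p) = aop l \<alpha> k (aop l \<alpha> i p)"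
  by (auto simp: aop_def XD_linear_simps Dop_commute Xop_commute Dop_Xop algebra_simps intro!: ext)

lemma asop_commute: "asop l \<beta> i (asop l \<beta> k p) = asop l \<beta> k (asop l \<beta> i p)"
  by (auto simp: asop_def XD_linear_simps Dop_commute Xop_commute Dop_Xop algebra_simps intro!: ext)

lemma aop_asop: "aop l \<alpha> i (asop l \<beta> k p) = (\<lambda>m. asop l \<beta> k (aop l \<alpha> i p) m + (if i = k then p m else 0))"
  by (auto simp: aop_def asop_def XD_linear_simps Dop_commute Xop_commute Dop_Xop algebra_simps intro!: ext)

lemma Eop_normal_order:
  "Eop l \<alpha> \<beta> i j p = (\<lambda>m. asop l \<beta> j (aop l \<alpha> i p) m + (if i = j then p m / 2 else 0))"
  by (auto simp: Eop_def aop_asop field_simps intro!: ext)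

lemma linear_op_Eop: "linear_op (Eop l \<alpha> \<beta> i j)"
  unfolding linear_op_def Eop_normal_order
  by (auto simp: linear_opD[OF linear_op_aop] linear_opD[OF linear_op_asop] algebra_simps)

lemma linear_op_Iop: "linear_op (Iop l \<alpha> \<beta>)"
  unfolding linear_op_def Iop_def
  by (auto simp: linear_opD[OF linear_op_Eop] algebra_simps sum.distrib sum_distrib_left)

lemma Eop_commutator:
  "Eop l \<alpha> \<beta> i j (Eop l \<alpha> \<beta> k r p) m - Eop l \<alpha> \<beta> k r (Eop l \<alpha> \<beta> i j p) m
   = (if i = r then Eop l \<alpha> \<beta> k j p m else 0) - (if k = j then Eop l \<alpha> \<beta> i r p m else 0)"
  by (auto simp: Eop_normal_order weyl_linear_simps aop_asop aop_commute asop_commute field_simps)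

lemma Eop_Iop_commute:
  assumes "i \<in> {1..2*l}" "j \<in> {1..2*l}"
  shows "Eop l \<alpha> \<beta> i j (Iop l \<alpha> \<beta> p) = Iop l \<alpha> \<beta> (Eop l \<alpha> \<beta> i j p)"
proof (rule ext)
  fix m
  have "Eop l \<alpha> \<beta> i j (Iop l \<alpha> \<beta> p) m - Iop l \<alpha> \<beta> (Eop l \<alpha> \<beta> i j p) m
      = (\<Sum>k\<in>{1..2*l}. Eop l \<alpha> \<beta> i j (Eop l \<alpha> \<beta> k k p) m - Eop l \<alpha> \<beta> k k (Eop l \<alpha> \<beta> i j p) m)"
    unfolding Iop_def by (simp add: linear_op_sum[OF linear_op_Eop] sum_subtractf)
  also have "\<dots> = (\<Sum>k\<in>{1..2*l}. (if i = k then Eop l \<alpha> \<beta> k j p m else 0)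
                                 - (if k = j then Eop l \<alpha> \<beta> i k p m else 0))"
    by (simp only: Eop_commutator)
  also have "\<dots> = 0"
    using assms by (simp add: sum_subtractf)
  finally show "Eop l \<alpha> \<beta> i j (Iop l \<alpha> \<beta> p) m = Iop l \<alpha> \<beta> (Eop l \<alpha> \<beta> i j p) m"
    by simp
qed

lemma Eop_le_le:
  "i \<le> l \<Longrightarrow> j \<le> l \<Longrightarrow>
   Eop l \<alpha> \<beta> i j p m = Xop j (Dop i p) m + (if i = j then p m / 2 else 0) + \<alpha> i * Xop j p m"
  by (simp add: Eop_normal_order aop_def asop_def XD_linear_simps)

lemma Eop_gt_gt:
  "\<not> i \<le> l \<Longrightarrow> \<not> j \<le> l \<Longrightarrow>
   Eop l \<alpha> \<beta> i j p m = - Xop i (Dop j p) m - (if i = j then p m / 2 else 0) + \<beta> (j - l) * Xop i p m"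
  by (simp add: Eop_normal_order aop_def asop_def XD_linear_simps Dop_Xop)

lemma Eop_le_gt:
  "i \<le> l \<Longrightarrow> \<not> j \<le> l \<Longrightarrow>
   Eop l \<alpha> \<beta> i j p m = - Dop j (Dop i p) m + \<beta> (j - l) * Dop i p m - \<alpha> i * Dop j p m
     + \<alpha> i * \<beta> (j - l) * p m"
  by (simp add: Eop_normal_order aop_def asop_def XD_linear_simps algebra_simps)

lemma WcarI:
  "finite {m. p m \<noteq> 0} \<Longrightarrow> (\<And>m k. p m \<noteq> 0 \<Longrightarrow> k \<notin> {1..2*l} \<Longrightarrow> m k = 0) \<Longrightarrow> p \<in> Wcar l"
  unfolding Wcar_def by blast

lemma WcarD:
  "p \<in> Wcar l \<Longrightarrow> finite {m. p m \<noteq> 0}"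
  "p \<in> Wcar l \<Longrightarrow> p m \<noteq> 0 \<Longrightarrow> k \<notin> {1..2*l} \<Longrightarrow> m k = 0"
  unfolding Wcar_def by blast+

lemma Wcar_bounded: "p \<in> Wcar l \<Longrightarrow> \<exists>n. \<forall>m. p m \<noteq> 0 \<longrightarrow> f m \<le> (n::nat)"
  using finite_nat_set_iff_bounded_le[of "f ` {m. p m \<noteq> 0}"] WcarD(1) by blast

lemma Wcar_lincomb: "p \<in> Wcar l \<Longrightarrow> q \<in> Wcar l \<Longrightarrow> (\<lambda>m. a * p m + b * q m) \<in> Wcar l"
proof (rule WcarI)
  assume p: "p \<in> Wcar l" and q: "q \<in> Wcar l"
  show "finite {m. a * p m + b * q m \<noteq> 0}"
    by (rule finite_subset[of _ "{m. p m \<noteq> 0} \<union> {m. q m \<noteq> 0}"]) (auto simp: WcarD[OF p] WcarD[OF q])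
  fix m k assume "a * p m + b * q m \<noteq> 0" "k \<notin> {1..2 * l}"
  moreover from this have "p m \<noteq> 0 \<or> q m \<noteq> 0" by auto
  ultimately show "m k = 0" using WcarD(2)[OF p] WcarD(2)[OF q] by blast
qed

lemma Wcar_zero: "(\<lambda>_. 0) \<in> Wcar l"
  by (rule WcarI) auto

lemma Wcar_add: "p \<in> Wcar l \<Longrightarrow> q \<in> Wcar l \<Longrightarrow> (\<lambda>m. p m + q m) \<in> Wcar l"
  using Wcar_lincomb[of p l q 1 1] by simp

lemma Wcar_scale: "p \<in> Wcar l \<Longrightarrow> (\<lambda>m. a * p m) \<in> Wcar l"
  using Wcar_lincomb[of p l p a 0] by simp

lemma Wcar_sum: "(\<And>k. k \<in> K \<Longrightarrow> f k \<in> Wcar l) \<Longrightarrow> (\<lambda>m. \<Sum>k\<in>K. f k m) \<in> Wcar l"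
proof (induction K rule: infinite_finite_induct)
  case (insert x F)
  then show ?case using Wcar_add[of "f x" l "\<lambda>m. \<Sum>k\<in>F. f k m"] by simp
qed (simp_all add: Wcar_zero)

lemma Wcar_shift:
  assumes p: "p \<in> Wcar l" and j: "j \<in> {1..2*l}"
    and shift: "\<And>m. q m \<noteq> 0 \<Longrightarrow> p (m(j := f (m j))) \<noteq> 0"
    and inj: "inj_on f ((\<lambda>m. m j) ` {m. q m \<noteq> 0})"
  shows "q \<in> Wcar l"
proof (rule WcarI)
  let ?h = "\<lambda>m. m(j := f (m j))"
  have h_inj: "inj_on ?h {m. q m \<noteq> 0}"
  proof (rule inj_onI)
    fix m m' assume "m \<in> {m. q m \<noteq> 0}" "m' \<in> {m. q m \<noteq> 0}" and eq: "?h m = ?h m'"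
    moreover have "f (m j) = f (m' j)" using fun_cong[OF eq, of j] by simp
    ultimately have "m j = m' j" using inj by (auto dest: inj_onD)
    then have "m = m'(j := m j)" using eq by (metis fun_upd_upd fun_upd_triv)
    then show "m = m'" using \<open>m j = m' j\<close> by simp
  qed
  have "?h ` {m. q m \<noteq> 0} \<subseteq> {m. p m \<noteq> 0}" using shift by auto
  then show "finite {m. q m \<noteq> 0}"
    by (rule finite_imageD[OF finite_subset[OF _ WcarD(1)[OF p]] h_inj])
  fix m k assume qm: "q m \<noteq> 0" and k: "k \<notin> {1..2*l}"
  have "(m(j := f (m j))) k = 0" using WcarD(2)[of p l "m(j := f (m j))" k] p shift[OF qm] k by blast
  then show "m k = 0" using j k by (auto split: if_splits)
qed

lemma Wcar_Xop: "p \<in> Wcar l \<Longrightarrow> j \<in> {1..2*l} \<Longrightarrow> Xop j p \<in> Wcar l"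
proof (rule Wcar_shift[where f = "\<lambda>k. k - 1"])
  show "inj_on (\<lambda>k. k - 1) ((\<lambda>m. m j) ` {m. Xop j p m \<noteq> 0})"
    by (rule inj_onI) (auto simp: Xop_def split: if_splits)
qed (auto simp: Xop_def split: if_splits)

lemma Wcar_Dop: "p \<in> Wcar l \<Longrightarrow> j \<in> {1..2*l} \<Longrightarrow> Dop j p \<in> Wcar l"
  by (rule Wcar_shift[where f = Suc]) (auto simp: Dop_def)

lemma Wcar_aop: "p \<in> Wcar l \<Longrightarrow> j \<in> {1..2*l} \<Longrightarrow> aop l \<alpha> j p \<in> Wcar l"
  unfolding aop_def using Wcar_lincomb[of "Dop j p" l p 1 "\<alpha> j"] by (auto simp: Wcar_Dop Wcar_Xop)

lemma Wcar_asop: "p \<in> Wcar l \<Longrightarrow> j \<in> {1..2*l} \<Longrightarrow> asop l \<beta> j p \<in> Wcar l"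
  unfolding asop_def using Wcar_lincomb[of "Dop j p" l p "-1" "\<beta> (j - l)"] by (auto simp: Wcar_Dop Wcar_Xop)

lemma Wcar_Eop: "p \<in> Wcar l \<Longrightarrow> i \<in> {1..2*l} \<Longrightarrow> j \<in> {1..2*l} \<Longrightarrow> Eop l \<alpha> \<beta> i j p \<in> Wcar l"
  unfolding Eop_def
  using Wcar_lincomb[of "aop l \<alpha> i (asop l \<beta> j p)" l "asop l \<beta> j (aop l \<alpha> i p)" "1/2" "1/2"]
  by (auto simp: Wcar_aop Wcar_asop add_divide_distrib)

lemma Wcar_Iop: "p \<in> Wcar l \<Longrightarrow> Iop l \<alpha> \<beta> p \<in> Wcar l"
  unfolding Iop_def by (rule Wcar_sum) (auto simp: Wcar_Eop)

lemma Wcar_wvec: "wvec \<in> Wcar l"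
  by (rule WcarI) (auto simp: wvec_def split: if_splits)

definition monomial :: "(nat \<Rightarrow> nat) \<Rightarrow> vec" where
  "monomial e = (\<lambda>m. if m = e then 1 else 0)"

definition total_degree :: "nat \<Rightarrow> (nat \<Rightarrow> nat) \<Rightarrow> nat" where
  "total_degree l m = (\<Sum>k\<in>{1..2*l}. m k)"

definition total_degree_le :: "nat \<Rightarrow> nat \<Rightarrow> vec \<Rightarrow> bool" where
  "total_degree_le l n p \<longleftrightarrow> (\<forall>m. p m \<noteq> 0 \<longrightarrow> total_degree l m \<le> n)"

lemma total_degree_upd:
  assumes "j \<in> {1..2*l}"
  shows "total_degree l (m(j := v)) + m j = total_degree l m + v"
proof -
  have "total_degree l (m(j := v)) = v + (\<Sum>k\<in>{1..2*l} - {j}. m k)"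
    unfolding total_degree_def using assms by (simp add: sum.remove)
  moreover have "total_degree l m = m j + (\<Sum>k\<in>{1..2*l} - {j}. m k)"
    unfolding total_degree_def using assms by (simp add: sum.remove)
  ultimately show ?thesis by simp
qed

lemma Wcar_monomial_expansion: "p \<in> Wcar l \<Longrightarrow> p = (\<lambda>m'. \<Sum>m\<in>{m. p m \<noteq> 0}. p m * monomial m m')"
proof (rule ext)
  fix m' assume "p \<in> Wcar l"
  have "(\<Sum>m\<in>{m. p m \<noteq> 0}. p m * monomial m m') = (\<Sum>m\<in>{m. p m \<noteq> 0}. if m = m' then p m else 0)"
    by (rule sum.cong) (auto simp: monomial_def)
  also have "\<dots> = p m'" using WcarD(1)[OF \<open>p \<in> Wcar l\<close>] by auto
  finally show "p m' = (\<Sum>m\<in>{m. p m \<noteq> 0}. p m * monomial m m')" by simp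
qed

lemma Wcar_monomial: "(\<And>k. k \<notin> {1..2*l} \<Longrightarrow> e k = 0) \<Longrightarrow> monomial e \<in> Wcar l"
  by (rule WcarI) (auto simp: monomial_def split: if_splits)

lemma total_degree_le_monomial: "total_degree l e \<le> n \<Longrightarrow> total_degree_le l n (monomial e)"
  by (auto simp: total_degree_le_def monomial_def split: if_splits)

lemma Wcar_total_degree_le: "p \<in> Wcar l \<Longrightarrow> \<exists>n. total_degree_le l n p"
  unfolding total_degree_le_def by (rule Wcar_bounded)

lemma total_degree_le_Xop_Dop:
  assumes deg: "total_degree_le l n p" and i: "i \<in> {1..2*l}" and j: "j \<in> {1..2*l}"
  shows "total_degree_le l n (Xop j (Dop i p))"
  unfolding total_degree_le_def
proof (intro allI impI)
  fix m assume "Xop j (Dop i p) m \<noteq> 0"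
  moreover define m1 where "m1 = m(j := m j - 1)"
  ultimately have pos: "0 < m j" and nz: "p (m1(i := m1 i + 1)) \<noteq> 0"
    by (auto simp: Xop_def Dop_def split: if_splits)
  have "total_degree l (m1(i := m1 i + 1)) \<le> n"
    using deg nz unfolding total_degree_le_def by blast
  moreover have "total_degree l (m1(i := m1 i + 1)) + m1 i = total_degree l m1 + (m1 i + 1)"
    by (rule total_degree_upd[OF i])
  moreover have "total_degree l m1 + m j = total_degree l m + (m j - 1)"
    unfolding m1_def by (rule total_degree_upd[OF j])
  ultimately show "total_degree l m \<le> n" using pos by linarith
qed

lemma total_degree_Dop_less:
  assumes "total_degree_le l n p" "j \<in> {1..2*l}" "Dop j p m \<noteq> 0"
  shows "total_degree l m < n"
proof -
  have "p (m(j := m j + 1)) \<noteq> 0" using assms(3) by (auto simp: Dop_def)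
  then have "total_degree l (m(j := m j + 1)) \<le> n" using assms(1) unfolding total_degree_le_def by blast
  moreover have "total_degree l (m(j := m j + 1)) + m j = total_degree l m + (m j + 1)"
    by (rule total_degree_upd[OF assms(2)])
  ultimately show ?thesis by linarith
qed

lemma total_degree_le_Dop: "total_degree_le l n p \<Longrightarrow> j \<in> {1..2*l} \<Longrightarrow> total_degree_le l (n - 1) (Dop j p)"
  using total_degree_Dop_less[of l n p j] unfolding total_degree_le_def by fastforce

lemma Xop_monomial:
  assumes pos: "0 < e j"
  shows "Xop j (monomial (e(j := e j - 1))) = monomial e"
proof -
  have "m = e" if "0 < m j" and eq: "m(j := m j - 1) = e(j := e j - 1)" for m
  proof (rule ext)
    fix k
    show "m k = e k"
      using fun_cong[OF eq, of k] that(1) pos by (cases "k = j") auto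
  qed
  then show ?thesis
    unfolding Xop_def monomial_def using pos by (auto intro!: ext)
qed

lemma gl_submodule_Wcar: "gl_submodule l \<alpha> \<beta> (Wcar l)"
  unfolding gl_submodule_def by (simp add: Wcar_zero Wcar_add Wcar_scale Wcar_Eop subset_iff)

lemma gl_submodule_subset: "gl_submodule l \<alpha> \<beta> M \<Longrightarrow> M \<subseteq> Wcar l"
  unfolding gl_submodule_def by blast

lemma gl_submodule_zero: "gl_submodule l \<alpha> \<beta> M \<Longrightarrow> (\<lambda>_. 0) \<in> M"
  unfolding gl_submodule_def by blast

lemma gl_submodule_add: "gl_submodule l \<alpha> \<beta> M \<Longrightarrow> p \<in> M \<Longrightarrow> q \<in> M \<Longrightarrow> (\<lambda>m. p m + q m) \<in> M"
  unfolding gl_submodule_def by blast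

lemma gl_submodule_scale: "gl_submodule l \<alpha> \<beta> M \<Longrightarrow> p \<in> M \<Longrightarrow> (\<lambda>m. a * p m) \<in> M"
  unfolding gl_submodule_def by blast

lemma gl_submodule_Eop:
  "gl_submodule l \<alpha> \<beta> M \<Longrightarrow> p \<in> M \<Longrightarrow> i \<in> {1..2*l} \<Longrightarrow> j \<in> {1..2*l} \<Longrightarrow> Eop l \<alpha> \<beta> i j p \<in> M"
  unfolding gl_submodule_def by blast

lemma gl_submodule_lincomb:
  "gl_submodule l \<alpha> \<beta> M \<Longrightarrow> p \<in> M \<Longrightarrow> q \<in> M \<Longrightarrow> (\<lambda>m. a * p m + b * q m) \<in> M"
  by (rule gl_submodule_add) (auto intro: gl_submodule_scale)

lemma gl_submodule_lincomb3:
  "gl_submodule l \<alpha> \<beta> M \<Longrightarrow> p \<in> M \<Longrightarrow> q \<in> M \<Longrightarrow> r \<in> M \<Longrightarrow> (\<lambda>m. a * p m + b * q m + c * r m) \<in> M"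
  using gl_submodule_lincomb[of l \<alpha> \<beta> M "\<lambda>m. a * p m + b * q m" r 1 c] gl_submodule_lincomb[of l \<alpha> \<beta> M p q a b]
  by simp

lemma gl_submodule_sum:
  assumes "gl_submodule l \<alpha> \<beta> M"
  shows "(\<And>k. k \<in> K \<Longrightarrow> f k \<in> M) \<Longrightarrow> (\<lambda>m. \<Sum>k\<in>K. f k m) \<in> M"
proof (induction K rule: infinite_finite_induct)
  case (insert x F)
  then show ?case using gl_submodule_add[OF assms, of "f x" "\<lambda>m. \<Sum>k\<in>F. f k m"] by simp
qed (simp_all add: gl_submodule_zero[OF assms])

lemma gl_submodule_Inter:
  assumes "\<And>M. M \<in> F \<Longrightarrow> gl_submodule l \<alpha> \<beta> M" and "F \<noteq> {}"
  shows "gl_submodule l \<alpha> \<beta> (\<Inter>F)"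
  unfolding gl_submodule_def
proof (intro conjI ballI allI)
  show "\<Inter>F \<subseteq> Wcar l" using assms gl_submodule_subset by blast
  show "(\<lambda>_. 0) \<in> \<Inter>F" using assms(1) gl_submodule_zero by blast
  show "(\<lambda>m. p m + q m) \<in> \<Inter>F" if "p \<in> \<Inter>F" "q \<in> \<Inter>F" for p q
    using that assms(1) gl_submodule_add by blast
  show "(\<lambda>m. c * p m) \<in> \<Inter>F" if "p \<in> \<Inter>F" for c p
    using that assms(1) gl_submodule_scale by blast
  show "Eop l \<alpha> \<beta> i j p \<in> \<Inter>F" if "i \<in> {1..2*l}" "j \<in> {1..2*l}" "p \<in> \<Inter>F" for i j p
    using that assms(1) gl_submodule_Eop by blast
qed

lemma gl_submodule_gen_submodule: "S \<subseteq> Wcar l \<Longrightarrow> gl_submodule l \<alpha> \<beta> (gen_submodule l \<alpha> \<beta> S)"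
  unfolding gen_submodule_def by (rule gl_submodule_Inter) (auto intro: gl_submodule_Wcar)

lemma gen_submodule_superset: "S \<subseteq> gen_submodule l \<alpha> \<beta> S"
  unfolding gen_submodule_def by blast

lemma gen_submodule_least: "gl_submodule l \<alpha> \<beta> M \<Longrightarrow> S \<subseteq> M \<Longrightarrow> gen_submodule l \<alpha> \<beta> S \<subseteq> M"
  unfolding gen_submodule_def by blast

definition gl_endomorphism :: "nat \<Rightarrow> (nat \<Rightarrow> complex) \<Rightarrow> (nat \<Rightarrow> complex) \<Rightarrow> (vec \<Rightarrow> vec) \<Rightarrow> bool" where
  "gl_endomorphism l \<alpha> \<beta> T \<longleftrightarrow> linear_op T \<and> (\<forall>p\<in>Wcar l. T p \<in> Wcar l) \<and>
     (\<forall>i\<in>{1..2*l}. \<forall>j\<in>{1..2*l}. \<forall>p. Eop l \<alpha> \<beta> i j (T p) = T (Eop l \<alpha> \<beta> i j p))"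

lemma gl_submodule_image:
  assumes M: "gl_submodule l \<alpha> \<beta> M" and T: "gl_endomorphism l \<alpha> \<beta> T"
  shows "gl_submodule l \<alpha> \<beta> (T ` M)"
  unfolding gl_submodule_def
proof (intro conjI ballI allI)
  have lin: "linear_op T" using T by (simp add: gl_endomorphism_def)
  show "T ` M \<subseteq> Wcar l" using T gl_submodule_subset[OF M] by (auto simp: gl_endomorphism_def)
  show "(\<lambda>_. 0) \<in> T ` M"
    using gl_submodule_zero[OF M] linear_op_zero[OF lin] by (metis image_eqI)
  show "(\<lambda>m. p m + q m) \<in> T ` M" if "p \<in> T ` M" "q \<in> T ` M" for p q
    using that gl_submodule_add[OF M] by (auto simp: linear_op_add[OF lin, symmetric])
  show "(\<lambda>m. c * p m) \<in> T ` M" if "p \<in> T ` M" for c p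
    using that gl_submodule_scale[OF M] by (auto simp: linear_op_scale[OF lin, symmetric])
  show "Eop l \<alpha> \<beta> i j p \<in> T ` M" if "i \<in> {1..2*l}" "j \<in> {1..2*l}" "p \<in> T ` M" for i j p
    using that T gl_submodule_Eop[OF M] by (auto simp: gl_endomorphism_def)
qed

lemma gl_submodule_preimage:
  assumes N: "gl_submodule l \<alpha> \<beta> N" and T: "gl_endomorphism l \<alpha> \<beta> T"
  shows "gl_submodule l \<alpha> \<beta> {p \<in> Wcar l. T p \<in> N}"
  unfolding gl_submodule_def
proof (intro conjI ballI allI)
  have lin: "linear_op T" using T by (simp add: gl_endomorphism_def)
  show "{p \<in> Wcar l. T p \<in> N} \<subseteq> Wcar l" by blast
  show "(\<lambda>_. 0) \<in> {p \<in> Wcar l. T p \<in> N}"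
    using Wcar_zero gl_submodule_zero[OF N] linear_op_zero[OF lin] by simp
  show "(\<lambda>m. p m + q m) \<in> {p \<in> Wcar l. T p \<in> N}"
    if "p \<in> {p \<in> Wcar l. T p \<in> N}" "q \<in> {p \<in> Wcar l. T p \<in> N}" for p q
    using that Wcar_add gl_submodule_add[OF N] by (simp add: linear_op_add[OF lin])
  show "(\<lambda>m. c * p m) \<in> {p \<in> Wcar l. T p \<in> N}" if "p \<in> {p \<in> Wcar l. T p \<in> N}" for c p
    using that Wcar_scale gl_submodule_scale[OF N] by (simp add: linear_op_scale[OF lin])
  show "Eop l \<alpha> \<beta> i j p \<in> {p \<in> Wcar l. T p \<in> N}"
    if "i \<in> {1..2*l}" "j \<in> {1..2*l}" "p \<in> {p \<in> Wcar l. T p \<in> N}" for i j p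
  proof -
    have "T (Eop l \<alpha> \<beta> i j p) = Eop l \<alpha> \<beta> i j (T p)"
      using that T by (simp add: gl_endomorphism_def)
    then show ?thesis using that Wcar_Eop gl_submodule_Eop[OF N] by auto
  qed
qed

definition Iop_minus :: "nat \<Rightarrow> (nat \<Rightarrow> complex) \<Rightarrow> (nat \<Rightarrow> complex) \<Rightarrow> complex \<Rightarrow> vec \<Rightarrow> vec" where
  "Iop_minus l \<alpha> \<beta> d r = (\<lambda>m. Iop l \<alpha> \<beta> r m - d * r m)"

lemma Wcar_Iop_minus: "r \<in> Wcar l \<Longrightarrow> Iop_minus l \<alpha> \<beta> d r \<in> Wcar l"
  unfolding Iop_minus_def using Wcar_lincomb[OF Wcar_Iop, where a = 1 and b = "-d"] by simp

lemma gl_endomorphism_Iop_minus: "gl_endomorphism l \<alpha> \<beta> (Iop_minus l \<alpha> \<beta> d)"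
  unfolding gl_endomorphism_def
proof (intro conjI ballI allI)
  show "linear_op (Iop_minus l \<alpha> \<beta> d)"
    unfolding linear_op_def Iop_minus_def by (auto simp: linear_opD[OF linear_op_Iop] algebra_simps)
  show "Iop_minus l \<alpha> \<beta> d p \<in> Wcar l" if "p \<in> Wcar l" for p
    using that by (rule Wcar_Iop_minus)
  show "Eop l \<alpha> \<beta> i j (Iop_minus l \<alpha> \<beta> d p) = Iop_minus l \<alpha> \<beta> d (Eop l \<alpha> \<beta> i j p)"
    if "i \<in> {1..2*l}" "j \<in> {1..2*l}" for i j p
    unfolding Iop_minus_def using that
    by (simp add: linear_op_diff[OF linear_op_Eop] linear_op_scale[OF linear_op_Eop] Eop_Iop_commute)
qed

section \<open>Cyclicity of \<open>w\<close>\<close>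

lemma submodule_contains_total_degree_le:
  assumes M: "gl_submodule l \<alpha> \<beta> M"
    and monomials: "\<And>e. (\<And>k. k \<notin> {1..2*l} \<Longrightarrow> e k = 0) \<Longrightarrow> total_degree l e \<le> n \<Longrightarrow> monomial e \<in> M"
    and p: "p \<in> Wcar l" "total_degree_le l n p"
  shows "p \<in> M"
proof -
  have "(\<lambda>m'. \<Sum>m\<in>{m. p m \<noteq> 0}. p m * monomial m m') \<in> M"
  proof (rule gl_submodule_sum[OF M])
    fix m assume "m \<in> {m. p m \<noteq> 0}"
    then have "monomial m \<in> M"
      using monomials WcarD(2)[OF p(1)] p(2) unfolding total_degree_le_def by blast
    then show "(\<lambda>m'. p m * monomial m m') \<in> M" by (rule gl_submodule_scale[OF M])
  qed
  then show "p \<in> M" using Wcar_monomial_expansion[OF p(1)] by simp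
qed

lemma Xop_in_submodule:
  assumes M: "gl_submodule l \<alpha> \<beta> M"
    and below: "\<And>q. q \<in> Wcar l \<Longrightarrow> total_degree_le l n q \<Longrightarrow> q \<in> M"
    and i0: "i0 \<in> {1..l}" "\<alpha> i0 \<noteq> 0" and j0: "j0 \<in> {l+1..2*l}" "\<beta> (j0 - l) \<noteq> 0"
    and p: "p \<in> Wcar l" "total_degree_le l n p" and j: "j \<in> {1..2*l}"
  shows "Xop j p \<in> M"
proof (cases "j \<le> l")
  case True
  have i0': "i0 \<in> {1..2*l}" using i0 by auto
  have XD: "Xop j (Dop i0 p) \<in> M"
    using below Wcar_Xop[OF Wcar_Dop[OF p(1) i0'] j] total_degree_le_Xop_Dop[OF p(2) i0' j] by blast
  define c where "c = (if i0 = j then 1/2 else (0::complex))"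
  have "Xop j p = (\<lambda>m. (1 / \<alpha> i0) * Eop l \<alpha> \<beta> i0 j p m + (- 1 / \<alpha> i0) * Xop j (Dop i0 p) m
                         + (- c / \<alpha> i0) * p m)"
    using i0 True by (auto simp: Eop_le_le c_def field_simps intro!: ext)
  also have "\<dots> \<in> M"
    by (rule gl_submodule_lincomb3[OF M gl_submodule_Eop[OF M below[OF p] i0' j] XD below[OF p]])
  finally show ?thesis .
next
  case False
  have j0': "j0 \<in> {1..2*l}" using j0 by auto
  have XD: "Xop j (Dop j0 p) \<in> M"
    using below Wcar_Xop[OF Wcar_Dop[OF p(1) j0'] j] total_degree_le_Xop_Dop[OF p(2) j0' j] by blast
  define c where "c = (if j = j0 then 1/2 else (0::complex))"
  have "Xop j p = (\<lambda>m. (1 / \<beta> (j0 - l)) * Eop l \<alpha> \<beta> j j0 p m + (1 / \<beta> (j0 - l)) * Xop j (Dop j0 p) m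
                         + (c / \<beta> (j0 - l)) * p m)"
    using j0 False by (auto simp: Eop_gt_gt c_def field_simps intro!: ext)
  also have "\<dots> \<in> M"
    by (rule gl_submodule_lincomb3[OF M gl_submodule_Eop[OF M below[OF p] j j0'] XD below[OF p]])
  finally show ?thesis .
qed

lemma monomial_zero: "monomial (\<lambda>_. 0) = wvec"
  by (simp add: monomial_def wvec_def)

lemma wvec_generates:
  assumes M: "gl_submodule l \<alpha> \<beta> M" and w: "wvec \<in> M"
    and i0: "i0 \<in> {1..l}" "\<alpha> i0 \<noteq> 0" and j0: "j0 \<in> {l+1..2*l}" "\<beta> (j0 - l) \<noteq> 0"
  shows "M = Wcar l"
proof -
  have monomial_in: "monomial e \<in> M"
    if "\<And>k. k \<notin> {1..2*l} \<Longrightarrow> e k = 0" "total_degree l e \<le> n" for n e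
    using that
  proof (induction n arbitrary: e)
    case 0
    then have "e = (\<lambda>_. 0)" by (auto simp: total_degree_def fun_eq_iff)
    then show ?case using w monomial_zero by simp
  next
    case (Suc n)
    show ?case
    proof (cases "total_degree l e \<le> n")
      case True
      then show ?thesis using Suc by blast
    next
      case False
      then have "total_degree l e \<noteq> 0" by simp
      then obtain j where j: "j \<in> {1..2*l}" "0 < e j"
        unfolding total_degree_def by (metis neq0_conv sum.neutral)
      let ?e = "e(j := e j - 1)"
      have "total_degree l ?e + e j = total_degree l e + (e j - 1)" by (rule total_degree_upd[OF j(1)])
      then have "total_degree l ?e \<le> n" using Suc.prems(2) j(2) by linarith
      then have deg: "total_degree_le l n (monomial ?e)" by (rule total_degree_le_monomial)
      have supp: "\<And>k. k \<notin> {1..2*l} \<Longrightarrow> ?e k = 0" using Suc.prems(1) j(1) by auto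
      have below: "q \<in> M" if "q \<in> Wcar l" "total_degree_le l n q" for q
        by (rule submodule_contains_total_degree_le[OF M Suc.IH that])
      have "Xop j (monomial ?e) \<in> M"
        by (rule Xop_in_submodule[OF M below i0 j0 Wcar_monomial[OF supp] deg j(1)])
      then show ?thesis using Xop_monomial[of e j, OF j(2)] by simp
    qed
  qed
  show ?thesis
  proof
    show "M \<subseteq> Wcar l" by (rule gl_submodule_subset[OF M])
    show "Wcar l \<subseteq> M"
    proof
      fix q assume q: "q \<in> Wcar l"
      then obtain n where "total_degree_le l n q" using Wcar_total_degree_le by blast
      then show "q \<in> M" using submodule_contains_total_degree_le[OF M monomial_in q] by blast
    qed
  qed
qed

section \<open>\<open>N\<close> is the image of \<open>I - d\<close>\<close>

lemma Wcar_Iop_power: "(Iop l \<alpha> \<beta> ^^ k) wvec \<in> Wcar l"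
  by (induction k) (simp_all add: Wcar_wvec Wcar_Iop)

lemma CIw_subset_Wcar: "CIw l \<alpha> \<beta> \<subseteq> Wcar l"
  unfolding CIw_def by (auto intro!: Wcar_sum Wcar_scale Wcar_Iop_power)

lemma wvec_in_CIw: "wvec \<in> CIw l \<alpha> \<beta>"
  unfolding CIw_def by (rule CollectI, rule exI[of _ 1], rule exI[of _ "\<lambda>_. 1"]) simp

lemma Nsub_eq_range:
  assumes i0: "i0 \<in> {1..l}" "\<alpha> i0 \<noteq> 0" and j0: "j0 \<in> {l+1..2*l}" "\<beta> (j0 - l) \<noteq> 0"
  shows "Nsub l d \<alpha> \<beta> = Iop_minus l \<alpha> \<beta> d ` Wcar l"
proof
  let ?T = "Iop_minus l \<alpha> \<beta> d"
  have T: "gl_endomorphism l \<alpha> \<beta> ?T" by (rule gl_endomorphism_Iop_minus)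
  have gens: "{(\<lambda>m. Iop l \<alpha> \<beta> v m - d * v m) | v. v \<in> CIw l \<alpha> \<beta>} = ?T ` CIw l \<alpha> \<beta>"
    by (auto simp: Iop_minus_def)
  have gens_range: "?T ` CIw l \<alpha> \<beta> \<subseteq> ?T ` Wcar l"
    using CIw_subset_Wcar by blast
  show "Nsub l d \<alpha> \<beta> \<subseteq> ?T ` Wcar l"
    unfolding Nsub_def gens
    by (rule gen_submodule_least[OF gl_submodule_image[OF gl_submodule_Wcar T] gens_range])
  have N: "gl_submodule l \<alpha> \<beta> (Nsub l d \<alpha> \<beta>)"
    unfolding Nsub_def gens
    by (rule gl_submodule_gen_submodule) (use gens_range gl_submodule_image[OF gl_submodule_Wcar T] in
        \<open>auto dest: gl_submodule_subset\<close>)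
  have "?T wvec \<in> Nsub l d \<alpha> \<beta>"
    using wvec_in_CIw gen_submodule_superset unfolding Nsub_def gens by blast
  then have "{p \<in> Wcar l. ?T p \<in> Nsub l d \<alpha> \<beta>} = Wcar l"
    by (intro wvec_generates[OF gl_submodule_preimage[OF N T] _ i0 j0]) (simp add: Wcar_wvec)
  then show "?T ` Wcar l \<subseteq> Nsub l d \<alpha> \<beta>" by blast
qed

section \<open>The degree in \<open>z(i0)\<close>\<close>

text \<open>\<open>eigen_coeff l \<alpha> \<beta> i\<close> is the eigenvalue on \<open>w\<close> of \<open>a(i)\<close> for \<open>i \<le> l\<close> and of \<open>a\<^sup>*(i)\<close> for \<open>i > l\<close>.\<close>

definition eigen_coeff :: "nat \<Rightarrow> (nat \<Rightarrow> complex) \<Rightarrow> (nat \<Rightarrow> complex) \<Rightarrow> nat \<Rightarrow> complex" where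
  "eigen_coeff l \<alpha> \<beta> i = (if i \<le> l then \<alpha> i else \<beta> (i - l))"

definition diag_coeff :: "nat \<Rightarrow> nat \<Rightarrow> (nat \<Rightarrow> nat) \<Rightarrow> complex" where
  "diag_coeff l i m = (if i \<le> l then of_nat (m i) + 1/2 else - (of_nat (m i) + 1/2))"

lemma Xop_Dop_same: "Xop i (Dop i p) m = of_nat (m i) * p m"
  by (auto simp: Xop_def Dop_def fun_upd_idem)

lemma Eop_diagonal: "Eop l \<alpha> \<beta> i i p m = diag_coeff l i m * p m + eigen_coeff l \<alpha> \<beta> i * Xop i p m"
  by (cases "i \<le> l") (simp_all add: Eop_le_le Eop_gt_gt Xop_Dop_same diag_coeff_def eigen_coeff_def algebra_simps)

definition var_degree_le :: "nat \<Rightarrow> nat \<Rightarrow> vec \<Rightarrow> bool" where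
  "var_degree_le i k p \<longleftrightarrow> (\<forall>m. p m \<noteq> 0 \<longrightarrow> m i \<le> k)"

lemma Wcar_var_degree_le: "p \<in> Wcar l \<Longrightarrow> \<exists>k. var_degree_le i k p"
  unfolding var_degree_le_def by (rule Wcar_bounded)

lemma Iop_beyond_var_degree:
  assumes i0: "i0 \<in> {1..l}" and deg: "var_degree_le i0 k r" and m: "k < m i0"
  shows "Iop l \<alpha> \<beta> r m = \<alpha> i0 * Xop i0 r m"
proof -
  have "Iop l \<alpha> \<beta> r m = (\<Sum>i\<in>{1..2*l}. diag_coeff l i m * r m + eigen_coeff l \<alpha> \<beta> i * Xop i r m)"
    by (simp add: Iop_def Eop_diagonal)
  also have "\<dots> = (\<Sum>i\<in>{1..2*l}. if i = i0 then \<alpha> i0 * Xop i0 r m else 0)"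
  proof (rule sum.cong)
    fix i assume "i \<in> {1..2*l}"
    have "r m = 0" using deg m by (force simp: var_degree_le_def)
    moreover have "Xop i r m = 0" if "i \<noteq> i0"
      using deg m that by (force simp: Xop_def var_degree_le_def)
    ultimately show "diag_coeff l i m * r m + eigen_coeff l \<alpha> \<beta> i * Xop i r m
        = (if i = i0 then \<alpha> i0 * Xop i0 r m else 0)"
      using i0 by (auto simp: eigen_coeff_def)
  qed simp
  also have "\<dots> = \<alpha> i0 * Xop i0 r m"
    using i0 by simp
  finally show ?thesis .
qed

lemma Wcar_var_degree_attained:
  assumes p: "p \<in> Wcar l" and nz: "p \<noteq> (\<lambda>_. 0)"
  obtains k m0 where "var_degree_le i k p" "p m0 \<noteq> 0" "m0 i = k"
proof -
  let ?S = "(\<lambda>m. m i) ` {m. p m \<noteq> 0}"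
  have fin: "finite ?S" using WcarD(1)[OF p] by blast
  have ne: "?S \<noteq> {}" using nz by auto
  have "var_degree_le i (Max ?S) p" using fin by (simp add: var_degree_le_def)
  moreover obtain m0 where "p m0 \<noteq> 0" "m0 i = Max ?S" using Max_in[OF fin ne] by auto
  ultimately show ?thesis using that by blast
qed

lemma Iop_minus_neq_wvec:
  assumes i0: "i0 \<in> {1..l}" "\<alpha> i0 \<noteq> 0" and r: "r \<in> Wcar l"
  shows "Iop_minus l \<alpha> \<beta> d r \<noteq> wvec"
proof (cases "r = (\<lambda>_. 0)")
  case True
  then have "Iop_minus l \<alpha> \<beta> d r (\<lambda>_. 0) = 0"
    by (simp add: Iop_minus_def linear_op_zero[OF linear_op_Iop])
  then show ?thesis by (auto simp: wvec_def)
next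
  case False
  then obtain k m0 where k: "var_degree_le i0 k r" and m0: "r m0 \<noteq> 0" "m0 i0 = k"
    using Wcar_var_degree_attained[OF r] by blast
  define m where "m = m0(i0 := Suc k)"
  have "r m = 0" using k by (auto simp: var_degree_le_def m_def)
  moreover have "Iop l \<alpha> \<beta> r m = \<alpha> i0 * r m0"
    using Iop_beyond_var_degree[OF i0(1) k, of m] m0(2) by (simp add: m_def Xop_def fun_upd_idem)
  ultimately have "Iop_minus l \<alpha> \<beta> d r m \<noteq> 0" using i0(2) m0(1) by (simp add: Iop_minus_def)
  moreover have "wvec m = 0" by (auto simp: wvec_def m_def dest: fun_cong[of _ _ i0])
  ultimately show ?thesis by auto
qed

text \<open>Each step cancels the top \<open>z(i0)\<close>-part \<open>z(i0)\<^sup>k\<^sup>+\<^sup>1 c\<close> of \<open>p\<close> by \<open>(I - d) r1\<close>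
  with \<open>r1 = z(i0)\<^sup>k c / \<alpha>(i0)\<close>.\<close>

lemma reduce_var_degree:
  assumes i0: "i0 \<in> {1..l}" "\<alpha> i0 \<noteq> 0"
  shows "p \<in> Wcar l \<Longrightarrow> var_degree_le i0 k p \<Longrightarrow>
    \<exists>r\<in>Wcar l. var_degree_le i0 0 (\<lambda>m. p m - Iop_minus l \<alpha> \<beta> d r m)"
proof (induction k arbitrary: p)
  case 0
  then show ?case
    by (intro bexI[of _ "\<lambda>_. 0"])
       (simp_all add: Iop_minus_def linear_op_zero[OF linear_op_Iop] Wcar_zero)
next
  case (Suc k)
  have i0': "i0 \<in> {1..2*l}" using i0 by auto
  define r1 where "r1 = (\<lambda>m. if m i0 = k then p (m(i0 := Suc k)) / \<alpha> i0 else 0)"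
  have r1: "r1 \<in> Wcar l"
  proof (rule Wcar_shift[OF Suc.prems(1) i0', where f = "\<lambda>_. Suc k"])
    show "p (m(i0 := Suc k)) \<noteq> 0" if "r1 m \<noteq> 0" for m
      using that by (simp add: r1_def split: if_splits)
    show "inj_on (\<lambda>_. Suc k) ((\<lambda>m. m i0) ` {m. r1 m \<noteq> 0})"
      by (rule inj_onI) (auto simp: r1_def split: if_splits)
  qed
  have r1_deg: "var_degree_le i0 k r1" by (simp add: var_degree_le_def r1_def)
  define p' where "p' = (\<lambda>m. p m - Iop_minus l \<alpha> \<beta> d r1 m)"
  have p': "p' \<in> Wcar l"
    unfolding p'_def using Wcar_lincomb[OF Suc.prems(1) Wcar_Iop_minus[OF r1], where a = 1 and b = "-1"] by simp
  have "p' m = 0" if "k < m i0" for m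
  proof -
    have "Iop l \<alpha> \<beta> r1 m = \<alpha> i0 * Xop i0 r1 m" by (rule Iop_beyond_var_degree[where m = m, OF i0(1) r1_deg that])
    also have "\<dots> = p m"
    proof (cases "m i0 = Suc k")
      case True
      then show ?thesis using i0(2) by (simp add: Xop_def r1_def fun_upd_idem)
    next
      case False
      then have "p m = 0" using Suc.prems(2) that by (force simp: var_degree_le_def)
      moreover have "m i0 - 1 \<noteq> k" using False that by linarith
      ultimately show ?thesis by (simp add: Xop_def r1_def)
    qed
    finally show "p' m = 0" using that by (simp add: p'_def Iop_minus_def r1_def)
  qed
  then have "var_degree_le i0 k p'" unfolding var_degree_le_def using not_le by blast
  then obtain r2 where r2: "r2 \<in> Wcar l" "var_degree_le i0 0 (\<lambda>m. p' m - Iop_minus l \<alpha> \<beta> d r2 m)"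
    using Suc.IH p' by blast
  have "(\<lambda>m. p m - Iop_minus l \<alpha> \<beta> d (\<lambda>m. r1 m + r2 m) m) = (\<lambda>m. p' m - Iop_minus l \<alpha> \<beta> d r2 m)"
    unfolding p'_def by (simp add: Iop_minus_def linear_op_add[OF linear_op_Iop] algebra_simps)
  then show ?case using r2 Wcar_add[OF r1 r2(1)] by (intro bexI[of _ "\<lambda>m. r1 m + r2 m"]) auto
qed

section \<open>Irreducibility\<close>

lemma var_degree_le_Dop: "var_degree_le i k q \<Longrightarrow> j \<noteq> i \<Longrightarrow> var_degree_le i k (Dop j q)"
  by (auto simp: var_degree_le_def Dop_def)

lemma Dop_var_free:
  assumes "var_degree_le i 0 q"
  shows "Dop i q = (\<lambda>_. 0)"
proof (rule ext)
  fix m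
  have "q (m(i := m i + 1)) = 0" using assms by (force simp: var_degree_le_def)
  then show "Dop i q m = 0" by (simp add: Dop_def)
qed

lemma Dop_gt_in_submodule:
  assumes M: "gl_submodule l \<alpha> \<beta> M" and i0: "i0 \<in> {1..l}" "\<alpha> i0 \<noteq> 0" and j: "j \<in> {l+1..2*l}"
    and q: "q \<in> M" "var_degree_le i0 0 q"
  shows "Dop j q \<in> M"
proof -
  have D0: "Dop i0 q = (\<lambda>_. 0)" by (rule Dop_var_free[OF q(2)])
  then have "Dop j (Dop i0 q) = (\<lambda>_. 0)" by (simp add: linear_op_zero[OF linear_op_Dop])
  then have "Eop l \<alpha> \<beta> i0 j q m = - \<alpha> i0 * Dop j q m + \<alpha> i0 * \<beta> (j - l) * q m" for m
    using Eop_le_gt[of i0 l j \<alpha> \<beta> q m] i0 j D0 by simp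
  then have "Dop j q = (\<lambda>m. (- 1 / \<alpha> i0) * Eop l \<alpha> \<beta> i0 j q m + \<beta> (j - l) * q m)"
    using i0(2) by (auto simp: field_simps intro!: ext)
  also have "\<dots> \<in> M"
    using i0 j by (intro gl_submodule_lincomb[OF M gl_submodule_Eop[OF M q(1)] q(1)]) auto
  finally show ?thesis .
qed

lemma Dop_le_in_submodule:
  assumes M: "gl_submodule l \<alpha> \<beta> M" and i: "i \<in> {1..l}"
    and j0: "j0 \<in> {l+1..2*l}" "\<beta> (j0 - l) \<noteq> 0" and q: "q \<in> M" "Dop j0 q = (\<lambda>_. 0)"
  shows "Dop i q \<in> M"
proof -
  have "Dop j0 (Dop i q) = (\<lambda>_. 0)" using q(2) by (simp add: Dop_commute linear_op_zero[OF linear_op_Dop])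
  then have "Eop l \<alpha> \<beta> i j0 q m = \<beta> (j0 - l) * Dop i q m + \<alpha> i * \<beta> (j0 - l) * q m" for m
    using Eop_le_gt[of i l j0 \<alpha> \<beta> q m] i j0 q(2) by simp
  then have "Dop i q = (\<lambda>m. (1 / \<beta> (j0 - l)) * Eop l \<alpha> \<beta> i j0 q m + (- \<alpha> i) * q m)"
    using j0(2) by (auto simp: field_simps intro!: ext)
  also have "\<dots> \<in> M"
    using i j0 by (intro gl_submodule_lincomb[OF M gl_submodule_Eop[OF M q(1)] q(1)]) auto
  finally show ?thesis .
qed

lemma Wcar_const_if_Dop_zero:
  assumes q: "q \<in> Wcar l" and D: "\<And>k. k \<in> {1..2*l} \<Longrightarrow> Dop k q = (\<lambda>_. 0)"
  shows "q = (\<lambda>m. q (\<lambda>_. 0) * wvec m)"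
proof (rule ext)
  fix m
  show "q m = q (\<lambda>_. 0) * wvec m"
  proof (cases "m = (\<lambda>_. 0)")
    case False
    then obtain k where k: "m k \<noteq> 0" by auto
    have "q m = 0"
    proof (rule ccontr)
      assume qm: "q m \<noteq> 0"
      then have "k \<in> {1..2*l}" using WcarD(2)[of q l m k] q k by blast
      moreover have "Dop k q (m(k := m k - 1)) = of_nat (m k) * q m"
        using k by (simp add: Dop_def fun_upd_idem)
      ultimately show False using D k qm by simp
    qed
    then show ?thesis using False by (simp add: wvec_def)
  qed (simp add: wvec_def)
qed

lemma wvec_in_submodule_if_var_free:
  assumes M: "gl_submodule l \<alpha> \<beta> M"
    and i0: "i0 \<in> {1..l}" "\<alpha> i0 \<noteq> 0" and j0: "j0 \<in> {l+1..2*l}" "\<beta> (j0 - l) \<noteq> 0"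
    and q: "q \<in> M" "var_degree_le i0 0 q" "q \<noteq> (\<lambda>_. 0)"
  shows "wvec \<in> M"
proof -
  obtain n where "total_degree_le l n q"
    using Wcar_total_degree_le gl_submodule_subset[OF M] q(1) by blast
  then show ?thesis using q
  proof (induction n arbitrary: q rule: less_induct)
    case (less n q)
    have descend: "wvec \<in> M"
      if j: "j \<in> {1..2*l}" "j \<noteq> i0" and DM: "Dop j q \<in> M" and nz: "Dop j q \<noteq> (\<lambda>_. 0)" for j
    proof -
      obtain m where "Dop j q m \<noteq> 0" using nz by auto
      then have "total_degree l m < n" by (rule total_degree_Dop_less[OF less.prems(1) j(1)])
      then have "n - 1 < n" by linarith
      then show ?thesis
        using less.IH total_degree_le_Dop[OF less.prems(1) j(1)] DM
          var_degree_le_Dop[OF less.prems(3) j(2)] nz by blast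
    qed
    show "wvec \<in> M"
    proof (cases "\<exists>j\<in>{l+1..2*l}. Dop j q \<noteq> (\<lambda>_. 0)")
      case True
      then obtain j where j: "j \<in> {l+1..2*l}" "Dop j q \<noteq> (\<lambda>_. 0)" by blast
      have "j \<in> {1..2*l}" "j \<noteq> i0" using j(1) i0(1) by auto
      then show ?thesis
        using descend Dop_gt_in_submodule[OF M i0 j(1) less.prems(2,3)] j(2) by blast
    next
      case no_gt: False
      show ?thesis
      proof (cases "\<exists>i\<in>{1..l}. i \<noteq> i0 \<and> Dop i q \<noteq> (\<lambda>_. 0)")
        case True
        then obtain i where i: "i \<in> {1..l}" "i \<noteq> i0" "Dop i q \<noteq> (\<lambda>_. 0)" by blast
        have "Dop j0 q = (\<lambda>_. 0)" using no_gt j0(1) by blast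
        moreover have "i \<in> {1..2*l}" using i(1) by auto
        ultimately show ?thesis
          using descend Dop_le_in_submodule[OF M i(1) j0 less.prems(2)] i(2,3) by blast
      next
        case False
        have "Dop k q = (\<lambda>_. 0)" if "k \<in> {1..2*l}" for k
          using that False no_gt Dop_var_free[OF less.prems(3)] by (cases "k \<le> l") force+
        then have const: "q = (\<lambda>m. q (\<lambda>_. 0) * wvec m)"
          using Wcar_const_if_Dop_zero gl_submodule_subset[OF M] less.prems(2) by blast
        then have "q (\<lambda>_. 0) \<noteq> 0" using less.prems(4) by force
        moreover have "(\<lambda>m. (1 / q (\<lambda>_. 0)) * q m) \<in> M" by (rule gl_submodule_scale[OF M less.prems(2)])
        ultimately show ?thesis by (subst (asm) const) simp
      qed
    qed
  qed
qed

lemma submodule_containing_range_Iop_minus: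
  assumes M: "gl_submodule l \<alpha> \<beta> M" and range: "Iop_minus l \<alpha> \<beta> d ` Wcar l \<subseteq> M"
    and i0: "i0 \<in> {1..l}" "\<alpha> i0 \<noteq> 0" and j0: "j0 \<in> {l+1..2*l}" "\<beta> (j0 - l) \<noteq> 0"
  shows "M = Iop_minus l \<alpha> \<beta> d ` Wcar l \<or> M = Wcar l"
proof (cases "M \<subseteq> Iop_minus l \<alpha> \<beta> d ` Wcar l")
  case False
  then obtain p where p: "p \<in> M" "p \<notin> Iop_minus l \<alpha> \<beta> d ` Wcar l" by blast
  have pW: "p \<in> Wcar l" using gl_submodule_subset[OF M] p(1) by blast
  obtain k where "var_degree_le i0 k p" using Wcar_var_degree_le[OF pW] by blast
  then obtain r where r: "r \<in> Wcar l" and free: "var_degree_le i0 0 (\<lambda>m. p m - Iop_minus l \<alpha> \<beta> d r m)"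
    using reduce_var_degree[where \<alpha> = \<alpha>, OF i0 pW] by blast
  have "(\<lambda>m. 1 * p m + (-1) * Iop_minus l \<alpha> \<beta> d r m) \<in> M"
    using gl_submodule_lincomb[OF M p(1)] range r by blast
  moreover have "(\<lambda>m. p m - Iop_minus l \<alpha> \<beta> d r m) \<noteq> (\<lambda>_. 0)"
    using p(2) r by (auto simp: fun_eq_iff)
  ultimately have "wvec \<in> M"
    using wvec_in_submodule_if_var_free[OF M i0 j0 _ free] by simp
  then show ?thesis using wvec_generates[OF M _ i0 j0] by blast
qed (use range in blast)

theorem theorem9p2:
  fixes l :: nat and \<alpha> \<beta> :: "nat \<Rightarrow> complex" and d :: complex
  assumes "\<exists>i\<in>{1..l}. \<alpha> i \<noteq> 0"
    and "\<exists>i\<in>{1..l}. \<beta> i \<noteq> 0"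
  shows "irreducible_quotient l \<alpha> \<beta> (Nsub l d \<alpha> \<beta>)"
proof -
  obtain i0 where i0: "i0 \<in> {1..l}" "\<alpha> i0 \<noteq> 0" using assms(1) by blast
  obtain j where "j \<in> {1..l}" "\<beta> j \<noteq> 0" using assms(2) by blast
  then have j0: "j + l \<in> {l+1..2*l}" "\<beta> (j + l - l) \<noteq> 0" by auto
  have N: "Nsub l d \<alpha> \<beta> = Iop_minus l \<alpha> \<beta> d ` Wcar l" using i0 j0 by (rule Nsub_eq_range)
  have "Nsub l d \<alpha> \<beta> \<noteq> Wcar l"
    using Iop_minus_neq_wvec[where \<alpha> = \<alpha>, OF i0] Wcar_wvec unfolding N by (metis imageE)
  moreover have "M = Nsub l d \<alpha> \<beta> \<or> M = Wcar l"
    if "gl_submodule l \<alpha> \<beta> M" "Nsub l d \<alpha> \<beta> \<subseteq> M" for M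
    using submodule_containing_range_Iop_minus[OF that(1) _ i0 j0] that(2) unfolding N by blast
  ultimately show ?thesis unfolding irreducible_quotient_def by blast
qed

end
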